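(* Let $T\in\mathbb{P}(Sym^d(\mathbb{C}^{n+1}))$ and let $A\subset\mathbb{P}^n$ be a minimal decomposition of $T$. Assume that $\ell(A)\le d$ and that $A$ does not contain an aligned (i.e. collinear) subset of cardinality $d/2$. Then $T$ has rank $\ell(A)$ and $T$ is identifiable.
   Context: All spaces are complex projective; $\ell(A)$ is the cardinality of $A$. The Veronese map $\nu_d:\mathbb{P}^n\to\mathbb{P}(Sym^d(\mathbb{C}^{n+1}))$ sends $[L]$ ($L$ a linear form) to $[L^d]$. A finite set $A$ is a decomposition of $T$ if $T\in\langle\nu_d(A)\rangle$; it is minimal if no proper subset of $A$ is a decomposition of $T$. The rank of $T$ is the minimal cardinality of a decomposition. $T$ of rank $r$ is identifiable if it has only one decomposition of cardinality $r$, up to scaling and permutation of summands. *)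

theory Defs
  imports Complex_Main
begin

text \<open>Vectors of C^{n+1} are functions 'n \<Rightarrow> complex for a finite index type 'n
 (so n+1 = CARD('n)). Tensors of order d are functions (nat \<Rightarrow> 'n) \<Rightarrow> complex,
 where only the values on {..<d} of the index function matter.\<close>

definition cspan :: "('a \<Rightarrow> complex) set \<Rightarrow> ('a \<Rightarrow> complex) set" where
  "cspan S = {x. \<exists>F c. finite F \<and> F \<subseteq> S \<and> (\<forall>i. x i = (\<Sum>v\<in>F. c v * v i))}"

definition proj_points :: "('n::finite \<Rightarrow> complex) set set" where
  "proj_points = {L. \<exists>v. v \<noteq> (\<lambda>_. 0) \<and> L = cspan {v}}"

text \<open>The d-th power L^d of a linear form, as a symmetric tensor.\<close>
definition ver :: "nat \<Rightarrow> ('n::finite \<Rightarrow> complex) \<Rightarrow> ((nat \<Rightarrow> 'n) \<Rightarrow> complex)" where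
  "ver d v = (\<lambda>f. \<Prod>i<d. v (f i))"

definition ver_span :: "nat \<Rightarrow> ('n::finite \<Rightarrow> complex) set set \<Rightarrow> ((nat \<Rightarrow> 'n) \<Rightarrow> complex) set" where
  "ver_span d A = cspan (\<Union>L\<in>A. ver d ` L)"

definition is_decomposition :: "nat \<Rightarrow> ((nat \<Rightarrow> 'n::finite) \<Rightarrow> complex) \<Rightarrow> ('n \<Rightarrow> complex) set set \<Rightarrow> bool" where
  "is_decomposition d T A \<longleftrightarrow> finite A \<and> A \<subseteq> proj_points \<and> T \<in> ver_span d A"

definition minimal_decomposition :: "nat \<Rightarrow> ((nat \<Rightarrow> 'n::finite) \<Rightarrow> complex) \<Rightarrow> ('n \<Rightarrow> complex) set set \<Rightarrow> bool" where
  "minimal_decomposition d T A \<longleftrightarrow> is_decomposition d T A \<and> (\<forall>B. B \<subset> A \<longrightarrow> \<not> is_decomposition d T B)"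

definition tensor_rank :: "nat \<Rightarrow> ((nat \<Rightarrow> 'n::finite) \<Rightarrow> complex) \<Rightarrow> nat" where
  "tensor_rank d T = (LEAST r. \<exists>A. is_decomposition d T A \<and> card A = r)"

definition identifiable :: "nat \<Rightarrow> ((nat \<Rightarrow> 'n::finite) \<Rightarrow> complex) \<Rightarrow> bool" where
  "identifiable d T \<longleftrightarrow> (\<exists>!A. is_decomposition d T A \<and> card A = tensor_rank d T)"

definition aligned :: "('n::finite \<Rightarrow> complex) set set \<Rightarrow> bool" where
  "aligned S \<longleftrightarrow> (\<exists>u w. \<forall>L\<in>S. L \<subseteq> cspan {u, w})"

end

(*
  Let B be a decomposition of T with at most card A points and put Z = A \<union> B, so that
  card Z \<le> 2d.  If every line through a point p of Z carries at most d further points of Z,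
  then Z - {p} splits into d groups of at most two points, no group collinear with p.  A
  linear form vanishing on a group but not at p exists for each group, and their product is a
  degree d form vanishing on Z - {p} but not at p; contracting the two expansions of T with
  it shows that p has the same coefficient in A and in B.  A point where A and B differ
  therefore lies on a line containing at least d + 2 points of Z.  The argument applies to
  every point off that line, so A and B agree there; counting then puts more than d/2
  points of A on the line, which the hypothesis on aligned subsets excludes.
*)
theory Submission
  imports Defs "HOL-Library.FuncSet"
begin

lemma cspan_mono: "S \<subseteq> U \<Longrightarrow> cspan S \<subseteq> cspan U"
  unfolding cspan_def by blast

lemma cspan_combination:
  assumes "finite I" "b ` I \<subseteq> S"
  shows "(\<lambda>x. \<Sum>i\<in>I. k i * b i x) \<in> cspan S"
proof -
  define k' where "k' v = (\<Sum>i\<in>{i\<in>I. b i = v}. k i)" for v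
  have "(\<Sum>i\<in>I. k i * b i x) = (\<Sum>v\<in>b ` I. k' v * v x)" for x
  proof -
    have "(\<Sum>i\<in>I. k i * b i x) = (\<Sum>v\<in>b ` I. \<Sum>i\<in>{i\<in>I. b i = v}. k i * b i x)"
      using assms(1) by (rule sum.image_gen)
    also have "\<dots> = (\<Sum>v\<in>b ` I. k' v * v x)"
      unfolding k'_def sum_distrib_right by (intro sum.cong) auto
    finally show ?thesis .
  qed
  then show ?thesis
    using assms unfolding cspan_def by blast
qed

lemma cspan_subset_combinations:
  assumes "finite I" "\<forall>v\<in>S. \<exists>k. v = (\<lambda>x. \<Sum>i\<in>I. k i * b i x)" "y \<in> cspan S"
  shows "\<exists>k. y = (\<lambda>x. \<Sum>i\<in>I. k i * b i x)"
proof -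
  obtain F c where F: "F \<subseteq> S" "\<forall>x. y x = (\<Sum>v\<in>F. c v * v x)"
    using assms(3) unfolding cspan_def by blast
  obtain k where k: "\<forall>v\<in>S. v = (\<lambda>x. \<Sum>i\<in>I. k v i * b i x)"
    using bchoice[OF assms(2)] by blast
  have "y x = (\<Sum>i\<in>I. (\<Sum>v\<in>F. c v * k v i) * b i x)" for x
  proof -
    have "c v * v x = c v * (\<Sum>i\<in>I. k v i * b i x)" if "v \<in> F" for v
      using fun_cong[OF bspec[OF k], of v x] that F(1) by auto
    then have "(\<Sum>v\<in>F. c v * v x) = (\<Sum>v\<in>F. c v * (\<Sum>i\<in>I. k v i * b i x))"
      by (rule sum.cong[OF refl])
    then have "y x = (\<Sum>v\<in>F. c v * (\<Sum>i\<in>I. k v i * b i x))"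
      using F(2) by simp
    then show ?thesis
      by (simp add: sum_distrib_left sum_distrib_right mult.assoc sum.swap[of _ F])
  qed
  then show ?thesis
    by (intro exI[of _ "\<lambda>i. \<Sum>v\<in>F. c v * k v i"] ext)
qed

lemma cspan_finite_iff:
  assumes "finite S"
  shows "x \<in> cspan S \<longleftrightarrow> (\<exists>c. x = (\<lambda>i. \<Sum>v\<in>S. c v * v i))"
proof
  have basis: "\<forall>v\<in>S. \<exists>k. v = (\<lambda>i. \<Sum>u\<in>S. k u * u i)"
  proof
    fix v assume "v \<in> S"
    have "v i = (\<Sum>u\<in>S. (if u = v then 1 else 0) * u i)" for i
    proof -
      have "(\<Sum>u\<in>S. (if u = v then 1 else 0) * u i) = (\<Sum>u\<in>S. if u = v then v i else 0)"
        by (rule sum.cong) auto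
      then show ?thesis
        using \<open>v \<in> S\<close> assms by simp
    qed
    then show "\<exists>k. v = (\<lambda>i. \<Sum>u\<in>S. k u * u i)"
      by (intro exI[of _ "\<lambda>u. if u = v then 1 else 0"] ext)
  qed
  show "\<exists>c. x = (\<lambda>i. \<Sum>v\<in>S. c v * v i)" if "x \<in> cspan S"
    using cspan_subset_combinations[where b="\<lambda>v. v", OF assms basis that] .
  show "x \<in> cspan S" if "\<exists>c. x = (\<lambda>i. \<Sum>v\<in>S. c v * v i)"
    using that cspan_combination[where b="\<lambda>v. v", OF assms] by auto
qed

lemma cspan_empty: "cspan {} = {\<lambda>_. 0}"
  by (simp add: cspan_finite_iff set_eq_iff)

lemma cspan_singleton_iff: "x \<in> cspan {v} \<longleftrightarrow> (\<exists>a. x = (\<lambda>i. a * v i))"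
proof -
  have "(\<exists>c. x = (\<lambda>i. c v * v i)) \<longleftrightarrow> (\<exists>a. x = (\<lambda>i. a * v i))"
  proof
    assume "\<exists>a. x = (\<lambda>i. a * v i)"
    then obtain a where "x = (\<lambda>i. a * v i)" by blast
    then show "\<exists>c. x = (\<lambda>i. c v * v i)" by (intro exI[of _ "\<lambda>_. a"])
  next
    assume "\<exists>c. x = (\<lambda>i. c v * v i)"
    then obtain c where "x = (\<lambda>i. c v * v i)" by blast
    then show "\<exists>a. x = (\<lambda>i. a * v i)" by (intro exI[of _ "c v"])
  qed
  then show ?thesis
    by (simp add: cspan_finite_iff)
qed

lemma cspan_pair_iff: "x \<in> cspan {u, w} \<longleftrightarrow> (\<exists>a b. x = (\<lambda>i. a * u i + b * w i))"
proof (cases "u = w")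
  case True
  have "(\<exists>a. x = (\<lambda>i. a * u i)) \<longleftrightarrow> (\<exists>a b. x = (\<lambda>i. a * u i + b * u i))"
  proof
    assume "\<exists>a b. x = (\<lambda>i. a * u i + b * u i)"
    then obtain a b where "x = (\<lambda>i. a * u i + b * u i)" by blast
    then have "x = (\<lambda>i. (a + b) * u i)" by (simp add: distrib_right)
    then show "\<exists>a. x = (\<lambda>i. a * u i)" by blast
  next
    assume "\<exists>a. x = (\<lambda>i. a * u i)"
    then obtain a where "x = (\<lambda>i. a * u i)" by blast
    then have "x = (\<lambda>i. a * u i + 0 * u i)" by simp
    then show "\<exists>a b. x = (\<lambda>i. a * u i + b * u i)" by blast
  qed
  then show ?thesis
    using True by (simp add: cspan_singleton_iff)
next
  case False
  have "(\<exists>c. x = (\<lambda>i. c u * u i + c w * w i)) \<longleftrightarrow> (\<exists>a b. x = (\<lambda>i. a * u i + b * w i))"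
  proof
    assume "\<exists>a b. x = (\<lambda>i. a * u i + b * w i)"
    then obtain a b where "x = (\<lambda>i. a * u i + b * w i)" by blast
    then show "\<exists>c. x = (\<lambda>i. c u * u i + c w * w i)"
      using False by (intro exI[of _ "\<lambda>v. if v = u then a else b"]) auto
  next
    assume "\<exists>c. x = (\<lambda>i. c u * u i + c w * w i)"
    then obtain c where "x = (\<lambda>i. c u * u i + c w * w i)" by blast
    then show "\<exists>a b. x = (\<lambda>i. a * u i + b * w i)" by (intro exI[of _ "c u"] exI[of _ "c w"])
  qed
  then show ?thesis
    using False by (simp add: cspan_finite_iff)
qed

lemma cspan_pair_subset:
  assumes "u' \<in> cspan {u, w}" "w' \<in> cspan {u, w}"
  shows "cspan {u', w'} \<subseteq> cspan {u, w}"
proof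
  fix x assume "x \<in> cspan {u', w'}"
  then obtain a b where x: "x = (\<lambda>i. a * u' i + b * w' i)"
    by (auto simp: cspan_pair_iff)
  obtain a1 b1 a2 b2 where "u' = (\<lambda>i. a1 * u i + b1 * w i)" "w' = (\<lambda>i. a2 * u i + b2 * w i)"
    using assms by (auto simp: cspan_pair_iff)
  then have "x = (\<lambda>i. (a * a1 + b * a2) * u i + (a * b1 + b * b2) * w i)"
    unfolding x by (simp add: algebra_simps)
  then show "x \<in> cspan {u, w}"
    by (auto simp: cspan_pair_iff)
qed

lemma cspan_singleton_subset: "u \<in> cspan {w} \<Longrightarrow> cspan {u} \<subseteq> cspan {w}"
  using cspan_pair_subset[of u w w u] by simp

lemma cspan_independent_pair:
  assumes "r1 \<in> cspan {x, y}" "r2 \<in> cspan {x, y}" "r1 \<noteq> (\<lambda>_. 0)" "r2 \<notin> cspan {r1}"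
  shows "x \<in> cspan {r1, r2}"
proof -
  obtain a1 b1 where r1: "r1 = (\<lambda>i. a1 * x i + b1 * y i)"
    using assms(1) by (auto simp: cspan_pair_iff)
  obtain a2 b2 where r2: "r2 = (\<lambda>i. a2 * x i + b2 * y i)"
    using assms(2) by (auto simp: cspan_pair_iff)
  define D where "D = a1 * b2 - a2 * b1"
  have "D \<noteq> 0"
  proof
    assume "D = 0"
    then have e1: "b2 * r1 i = b1 * r2 i" and e2: "a2 * r1 i = a1 * r2 i" for i
      unfolding r1 r2 D_def by (auto simp: algebra_simps)
    show False
    proof (cases "b1 = 0")
      case False
      then have "r2 = (\<lambda>i. (b2 / b1) * r1 i)"
        using e1 by (auto simp: field_simps)
      then have "r2 \<in> cspan {r1}"
        unfolding cspan_singleton_iff by blast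
      then show False
        using assms(4) by blast
    next
      case True
      moreover have "a1 \<noteq> 0"
        using True assms(3) unfolding r1 by auto
      ultimately have "r2 = (\<lambda>i. (a2 / a1) * r1 i)"
        using e2 by (auto simp: field_simps)
      then have "r2 \<in> cspan {r1}"
        unfolding cspan_singleton_iff by blast
      then show False
        using assms(4) by blast
    qed
  qed
  have "b2 * r1 i - b1 * r2 i = D * x i" for i
    unfolding r1 r2 D_def by (simp add: algebra_simps)
  then have "x = (\<lambda>i. (b2 / D) * r1 i + (- b1 / D) * r2 i)"
    using \<open>D \<noteq> 0\<close> by (auto simp: field_simps)
  then show ?thesis
    unfolding cspan_pair_iff by blast
qed

definition rep :: "('n::finite \<Rightarrow> complex) set \<Rightarrow> 'n \<Rightarrow> complex" where
  "rep L = (SOME v. v \<noteq> (\<lambda>_. 0) \<and> L = cspan {v})"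

lemma
  assumes "L \<in> proj_points"
  shows rep_nonzero: "rep L \<noteq> (\<lambda>_. 0)" and cspan_rep: "cspan {rep L} = L"
proof -
  have "\<exists>v. v \<noteq> (\<lambda>_. 0) \<and> L = cspan {v}"
    using assms unfolding proj_points_def by blast
  then have "rep L \<noteq> (\<lambda>_. 0) \<and> L = cspan {rep L}"
    unfolding rep_def by (rule someI_ex)
  then show "rep L \<noteq> (\<lambda>_. 0)" "cspan {rep L} = L"
    by auto
qed

lemma rep_in_proj_point: "L \<in> proj_points \<Longrightarrow> rep L \<in> L"
  using cspan_rep[of L] cspan_singleton_iff[of "rep L" "rep L"] by force

lemma proj_point_eqI:
  assumes "L \<in> proj_points" "M \<in> proj_points" "rep L \<in> M"
  shows "L = M"
proof -
  obtain a where a: "rep L = (\<lambda>i. a * rep M i)"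
    using assms(2,3) cspan_rep[of M] cspan_singleton_iff by blast
  then have "a \<noteq> 0"
    using rep_nonzero[OF assms(1)] by auto
  then have "rep M = (\<lambda>i. (1 / a) * rep L i)"
    unfolding a by auto
  then have "rep M \<in> cspan {rep L}"
    unfolding cspan_singleton_iff by blast
  moreover have "rep L \<in> cspan {rep M}"
    using assms(2,3) cspan_rep by blast
  ultimately show ?thesis
    using cspan_singleton_subset cspan_rep assms(1,2) by blast
qed

definition proj_line :: "('n::finite \<Rightarrow> complex) set \<Rightarrow> ('n \<Rightarrow> complex) set \<Rightarrow> ('n \<Rightarrow> complex) set" where
  "proj_line p q = cspan {rep p, rep q}"

lemma rep_mem_proj_line: "rep p \<in> proj_line p q" "rep q \<in> proj_line p q"
  unfolding proj_line_def cspan_pair_iff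
  by (intro exI[of _ 1] exI[of _ 0], simp) (intro exI[of _ 0] exI[of _ 1], simp)

lemma proj_line_eq_if_rep_mem_cspan:
  assumes "p \<in> proj_points" "q \<in> proj_points" "r \<in> proj_points" "p \<noteq> q" "p \<noteq> r"
    and "rep p \<in> cspan {rep q, rep r}"
  shows "q \<noteq> r" "proj_line p q = proj_line p r"
proof -
  obtain a b where p: "rep p = (\<lambda>i. a * rep q i + b * rep r i)"
    using assms(6) by (auto simp: cspan_pair_iff)
  have not_on_point: "rep p \<notin> cspan {rep m}" if "m \<in> proj_points" "p \<noteq> m" for m
    using proj_point_eqI[OF assms(1) that(1)] cspan_rep that by blast
  show "q \<noteq> r"
  proof
    assume "q = r"
    then have "rep p = (\<lambda>i. (a + b) * rep q i)"
      unfolding p by (simp add: distrib_right)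
    then show False
      using not_on_point[OF assms(2,4)] by (auto simp: cspan_singleton_iff)
  qed
  have "b \<noteq> 0"
    using not_on_point[OF assms(2,4)] p by (auto simp: cspan_singleton_iff)
  moreover have "a \<noteq> 0"
    using not_on_point[OF assms(3,5)] p by (auto simp: cspan_singleton_iff)
  ultimately have "rep r = (\<lambda>i. (1 / b) * rep p i + (- a / b) * rep q i)"
      "rep q = (\<lambda>i. (1 / a) * rep p i + (- b / a) * rep r i)"
    unfolding p by (auto simp: field_simps)
  then have "rep r \<in> proj_line p q" "rep q \<in> proj_line p r"
    unfolding proj_line_def cspan_pair_iff by blast+
  then show "proj_line p q = proj_line p r"
    using rep_mem_proj_line unfolding proj_line_def
    by (intro subset_antisym cspan_pair_subset) auto
qed

lemma mem_cspan_two_points: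
  assumes "r1 \<in> proj_points" "r2 \<in> proj_points" "r1 \<noteq> r2"
    and "rep r1 \<in> cspan {x, y}" "rep r2 \<in> cspan {x, y}"
  shows "x \<in> cspan {rep r1, rep r2}"
proof (rule cspan_independent_pair[OF assms(4,5) rep_nonzero[OF assms(1)]])
  show "rep r2 \<notin> cspan {rep r1}"
    using proj_point_eqI[OF assms(2,1)] assms(1,3) cspan_rep by blast
qed

lemma aligned_if_reps_in_cspan:
  assumes "S \<subseteq> proj_points" "\<forall>L\<in>S. rep L \<in> cspan {u, w}"
  shows "aligned S"
  unfolding aligned_def
proof (intro exI ballI)
  fix L assume "L \<in> S"
  then have "cspan {rep L, rep L} \<subseteq> cspan {u, w}"
    using assms(2) by (intro cspan_pair_subset) auto
  then show "L \<subseteq> cspan {u, w}"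
    using assms(1) \<open>L \<in> S\<close> cspan_rep by auto
qed

lemma ver_scale: "ver d (\<lambda>i. a * v i) = (\<lambda>f. a ^ d * ver d v f)"
  by (simp add: ver_def prod.distrib)

lemma ver_span_iff:
  assumes "finite A" "A \<subseteq> proj_points"
  shows "T \<in> ver_span d A \<longleftrightarrow> (\<exists>c. T = (\<lambda>f. \<Sum>L\<in>A. c L * ver d (rep L) f))"
proof
  have generators: "\<forall>v\<in>(\<Union>L\<in>A. ver d ` L). \<exists>k. v = (\<lambda>f. \<Sum>M\<in>A. k M * ver d (rep M) f)"
  proof
    fix v assume "v \<in> (\<Union>L\<in>A. ver d ` L)"
    then obtain L u where L: "L \<in> A" "u \<in> L" "v = ver d u"
      by blast
    then have "u \<in> cspan {rep L}"
      using assms(2) cspan_rep by blast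
    then obtain a where "u = (\<lambda>i. a * rep L i)"
      unfolding cspan_singleton_iff by blast
    then have "v f = (\<Sum>M\<in>A. (if M = L then a ^ d else 0) * ver d (rep M) f)" for f
    proof -
      have "(\<Sum>M\<in>A. (if M = L then a ^ d else 0) * ver d (rep M) f)
          = (\<Sum>M\<in>A. if M = L then a ^ d * ver d (rep M) f else 0)"
        by (rule sum.cong) auto
      then show ?thesis
        using L assms(1) \<open>u = _\<close> by (simp add: ver_scale)
    qed
    then show "\<exists>k. v = (\<lambda>f. \<Sum>M\<in>A. k M * ver d (rep M) f)"
      by (intro exI[of _ "\<lambda>M. if M = L then a ^ d else 0"] ext)
  qed
  show "\<exists>c. T = (\<lambda>f. \<Sum>L\<in>A. c L * ver d (rep L) f)" if "T \<in> ver_span d A"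
    using cspan_subset_combinations[where b="\<lambda>L. ver d (rep L)", OF assms(1) generators]
      that unfolding ver_span_def .
  show "T \<in> ver_span d A" if "\<exists>c. T = (\<lambda>f. \<Sum>L\<in>A. c L * ver d (rep L) f)"
  proof -
    have "(\<lambda>L. ver d (rep L)) ` A \<subseteq> (\<Union>L\<in>A. ver d ` L)"
      using assms(2) rep_in_proj_point by blast
    then show ?thesis
      using that cspan_combination[OF assms(1)] unfolding ver_span_def by auto
  qed
qed

lemma minimal_decomposition_coeff_nonzero:
  assumes "minimal_decomposition d T A" "T = (\<lambda>f. \<Sum>L\<in>A. c L * ver d (rep L) f)" "L \<in> A"
  shows "c L \<noteq> 0"
proof
  assume "c L = 0"
  have A: "finite A" "A \<subseteq> proj_points"
    using assms(1) unfolding minimal_decomposition_def is_decomposition_def by auto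
  then have "T = (\<lambda>f. \<Sum>M\<in>A - {L}. c M * ver d (rep M) f)"
    using assms(2,3) \<open>c L = 0\<close> by (simp add: sum.remove)
  moreover have "finite (A - {L})" "A - {L} \<subseteq> proj_points"
    using A by auto
  ultimately have "is_decomposition d T (A - {L})"
    unfolding is_decomposition_def by (auto simp: ver_span_iff)
  moreover have "A - {L} \<subset> A"
    using assms(3) by blast
  ultimately show False
    using assms(1) unfolding minimal_decomposition_def by blast
qed

lemma decomposition_contains_minimal:
  assumes "is_decomposition d T B"
  shows "\<exists>B'\<subseteq>B. minimal_decomposition d T B'"
  using assms
proof (induction "card B" arbitrary: B rule: less_induct)
  case less
  show ?case
  proof (cases "minimal_decomposition d T B")
    case False
    then obtain B'' where B'': "B'' \<subset> B" "is_decomposition d T B''"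
      using less.prems unfolding minimal_decomposition_def by blast
    moreover have "finite B"
      using less.prems unfolding is_decomposition_def by auto
    ultimately show ?thesis
      using less.hyps[of B''] psubset_card_mono by (meson order.trans psubset_imp_subset)
  qed blast
qed

definition lin_form :: "('n::finite \<Rightarrow> complex) \<Rightarrow> ('n \<Rightarrow> complex) \<Rightarrow> complex" where
  "lin_form w v = (\<Sum>j\<in>UNIV. w j * v j)"

lemma lin_form_diff_left: "lin_form (\<lambda>j. w j - k * w' j) v = lin_form w v - k * lin_form w' v"
  unfolding lin_form_def by (simp add: algebra_simps sum_subtractf sum_distrib_left)

lemma lin_form_diff_right: "lin_form w (\<lambda>i. x i - t * s i) = lin_form w x - t * lin_form w s"
  unfolding lin_form_def by (simp add: algebra_simps sum_subtractf sum_distrib_left)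

lemma lin_form_vanishes_on_cspan:
  assumes "\<forall>v\<in>S. lin_form w v = 0" "x \<in> cspan S"
  shows "lin_form w x = 0"
proof -
  obtain F c where F: "F \<subseteq> S" "\<forall>i. x i = (\<Sum>v\<in>F. c v * v i)"
    using assms(2) unfolding cspan_def by blast
  have "lin_form w x = (\<Sum>v\<in>F. c v * lin_form w v)"
    unfolding lin_form_def
    by (simp add: F(2) sum_distrib_left sum_distrib_right mult.left_commute sum.swap[of _ F])
  also have "\<dots> = 0"
    using assms(1) F(1) by (intro sum.neutral) auto
  finally show ?thesis .
qed

lemma cspan_insert_add:
  assumes "finite S" "s \<notin> S" "y \<in> cspan S"
  shows "(\<lambda>i. y i + t * s i) \<in> cspan (insert s S)"
proof -
  obtain c where c: "y = (\<lambda>i. \<Sum>v\<in>S. c v * v i)"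
    using assms(1,3) cspan_finite_iff by blast
  have "(\<Sum>v\<in>S. (c(s := t)) v * v i) = (\<Sum>v\<in>S. c v * v i)" for i
    using assms(2) by (intro sum.cong) auto
  then have "(\<lambda>i. y i + t * s i) = (\<lambda>i. \<Sum>v\<in>insert s S. (c(s := t)) v * v i)"
    using assms(1,2) c by (simp add: add.commute)
  then show ?thesis
    using assms(1) cspan_finite_iff[of "insert s S"] by auto
qed

lemma separating_lin_form:
  assumes "finite S" "x \<notin> cspan S"
  shows "\<exists>w. (\<forall>v\<in>S. lin_form w v = 0) \<and> lin_form w x \<noteq> 0"
  using assms
proof (induction S arbitrary: x rule: finite_induct)
  case empty
  then obtain j where "x j \<noteq> 0"
    by (auto simp: cspan_empty)
  moreover have "lin_form (\<lambda>i. if i = j then 1 else 0) x = x j"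
    unfolding lin_form_def by (simp add: if_distrib[of "\<lambda>c. c * _"] cong: if_cong)
  ultimately show ?case
    by (intro exI[of _ "\<lambda>i. if i = j then 1 else 0"]) simp
next
  case (insert s S)
  have "x \<notin> cspan S"
    using insert.prems cspan_mono[of S "insert s S"] by blast
  then obtain w1 where w1: "\<forall>v\<in>S. lin_form w1 v = 0" "lin_form w1 x \<noteq> 0"
    using insert.IH by blast
  show ?case
  proof (cases "s \<in> cspan S")
    case True
    then show ?thesis
      using w1 lin_form_vanishes_on_cspan[OF w1(1)] by (intro exI[of _ w1]) simp
  next
    case False
    obtain w2 where w2: "\<forall>v\<in>S. lin_form w2 v = 0" "lin_form w2 s \<noteq> 0"
      using insert.IH[OF False] by blast
    \<comment> \<open>Project x along s onto the kernel of w2, separate the result from S, and correct by w2.\<close>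
    define t where "t = lin_form w2 x / lin_form w2 s"
    define y where "y = (\<lambda>i. x i - t * s i)"
    have "y \<notin> cspan S"
    proof
      assume "y \<in> cspan S"
      then have "(\<lambda>i. y i + t * s i) \<in> cspan (insert s S)"
        using cspan_insert_add insert.hyps by blast
      then show False
        using insert.prems unfolding y_def by simp
    qed
    then obtain w3 where w3: "\<forall>v\<in>S. lin_form w3 v = 0" "lin_form w3 y \<noteq> 0"
      using insert.IH by blast
    define k where "k = lin_form w3 s / lin_form w2 s"
    define w where "w = (\<lambda>j. w3 j - k * w2 j)"
    have "\<forall>v\<in>insert s S. lin_form w v = 0"
      using w2 w3 unfolding w_def lin_form_diff_left k_def by auto
    moreover have "lin_form w x = lin_form w3 y"
      unfolding w_def lin_form_diff_left y_def lin_form_diff_right k_def t_def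
      using w2(2) by (simp add: field_simps)
    ultimately show ?thesis
      using w3(2) by (intro exI[of _ w]) simp
  qed
qed

definition contract :: "nat \<Rightarrow> (nat \<Rightarrow> 'n::finite \<Rightarrow> complex) \<Rightarrow> ((nat \<Rightarrow> 'n) \<Rightarrow> complex) \<Rightarrow> complex" where
  "contract d W T = (\<Sum>f\<in>PiE {..<d} (\<lambda>_. UNIV). T f * (\<Prod>i<d. W i (f i)))"

lemma contract_ver: "contract d W (ver d v) = (\<Prod>i<d. lin_form (W i) v)"
proof -
  have "contract d W (ver d v) = (\<Sum>f\<in>PiE {..<d} (\<lambda>_. UNIV). \<Prod>i<d. W i (f i) * v (f i))"
    unfolding contract_def ver_def by (simp add: prod.distrib mult.commute)
  also have "\<dots> = (\<Prod>i<d. \<Sum>j\<in>UNIV. W i j * v j)"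
    by (rule prod_sum_PiE[symmetric]) auto
  finally show ?thesis
    unfolding lin_form_def .
qed

lemma contract_combination:
  "contract d W (\<lambda>f. \<Sum>L\<in>A. c L * T L f) = (\<Sum>L\<in>A. c L * contract d W (T L))"
  unfolding contract_def
  by (simp add: sum_distrib_left sum_distrib_right mult.assoc sum.swap[of _ A])

lemma sorted_key_far_apart:
  fixes key :: "'a \<Rightarrow> 'b::linorder"
  assumes "distinct xs" "sorted (map key xs)" "card {x\<in>set xs. key x = key (xs ! a)} \<le> k"
    and "a + k \<le> b" "b < length xs"
  shows "key (xs ! a) \<noteq> key (xs ! b)"
proof
  assume eq: "key (xs ! a) = key (xs ! b)"
  have "xs ! t \<in> {x\<in>set xs. key x = key (xs ! a)}" if "t \<in> {a..b}" for t
  proof -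
    have "key (xs ! a) \<le> key (xs ! t)" "key (xs ! t) \<le> key (xs ! b)"
      using sorted_nth_mono[OF assms(2), of a t] sorted_nth_mono[OF assms(2), of t b] that assms(5)
      by auto
    then have "key (xs ! t) = key (xs ! a)"
      using eq by (simp only: order_antisym)
    moreover have "xs ! t \<in> set xs"
      using that assms(5) by simp
    ultimately show ?thesis
      by simp
  qed
  then have "(!) xs ` {a..b} \<subseteq> {x\<in>set xs. key x = key (xs ! a)}"
    by blast
  then have "card ((!) xs ` {a..b}) \<le> card {x\<in>set xs. key x = key (xs ! a)}"
    by (rule card_mono[rotated]) simp
  moreover have "inj_on ((!) xs) {a..b}"
    using assms(5) by (intro inj_on_nth[OF assms(1)]) simp
  then have "card ((!) xs ` {a..b}) = Suc b - a"
    by (simp add: card_image)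
  ultimately show False
    using assms(3,4) by linarith
qed

lemma card_mod_fibre_le_2:
  fixes n k i :: nat
  assumes "n \<le> 2 * k"
  shows "card {a. a < n \<and> a mod k = i} \<le> 2"
proof -
  have "{a. a < n \<and> a mod k = i} \<subseteq> {i, i + k}"
  proof
    fix a assume a: "a \<in> {a. a < n \<and> a mod k = i}"
    then have "a div k < 2"
      using assms by (auto simp: div_less_iff_less_mult)
    then show "a \<in> {i, i + k}"
      using a div_mult_mod_eq[of a k] by (auto simp: less_2_cases_iff)
  qed
  then have "card {a. a < n \<and> a mod k = i} \<le> card {i, i + k}"
    by (intro card_mono) auto
  also have "\<dots> \<le> 2"
    by (simp add: card_insert_if)
  finally show ?thesis .
qed

lemma add_le_if_mod_eq:
  fixes a b k :: nat
  assumes "a < b" "a mod k = b mod k"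
  shows "a + k \<le> b"
proof -
  have "k dvd b - a"
    using assms mod_eq_dvd_iff_nat[of a b k] by auto
  then show ?thesis
    using assms(1) dvd_imp_le[of k "b - a"] by linarith
qed

lemma pairing_sorted_list:
  fixes key :: "'a \<Rightarrow> 'b::linorder"
  assumes "distinct xs" "sorted (map key xs)" "length xs \<le> 2 * k"
    and fibre: "\<And>x. x \<in> set xs \<Longrightarrow> card {y\<in>set xs. key y = key x} \<le> k"
  obtains g :: "'a \<Rightarrow> nat"
  where "\<And>x. x \<in> set xs \<Longrightarrow> g x < k" "\<And>i. card {x\<in>set xs. g x = i} \<le> 2"
    "\<And>x y. x \<in> set xs \<Longrightarrow> y \<in> set xs \<Longrightarrow> x \<noteq> y \<Longrightarrow> g x = g y \<Longrightarrow> key x \<noteq> key y"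
proof -
  \<comment> \<open>Pair the entries at positions a and a + k: sortedness makes each fibre of key a contiguous
    block of at most k entries, which cannot contain both.\<close>
  define n where "n = length xs"
  have far_apart: "key (xs ! a) \<noteq> key (xs ! b)" if "a < b" "b < n" "a mod k = b mod k" for a b
    using sorted_key_far_apart[OF assms(1,2) fibre add_le_if_mod_eq[OF that(1,3)]] that(1,2)
    unfolding n_def by simp
  have bij: "bij_betw ((!) xs) {..<n} (set xs)"
    using bij_betw_nth[OF assms(1)] unfolding n_def by blast
  define pos where "pos = the_inv_into {..<n} ((!) xs)"
  have pos: "pos x < n" "xs ! pos x = x" if "x \<in> set xs" for x
    using that bij bij_betw_the_inv_into[OF bij] f_the_inv_into_f_bij_betw[OF bij]
    unfolding pos_def bij_betw_def by auto
  show ?thesis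
  proof (rule that[of "\<lambda>x. pos x mod k"])
    fix x assume "x \<in> set xs"
    then have "0 < k"
      using pos(1) assms(3) unfolding n_def by fastforce
    then show "pos x mod k < k"
      by simp
  next
    fix i
    have "{x\<in>set xs. pos x mod k = i} \<subseteq> (!) xs ` {a. a < n \<and> a mod k = i}"
      using pos by (auto intro!: image_eqI)
    then have "card {x\<in>set xs. pos x mod k = i} \<le> card ((!) xs ` {a. a < n \<and> a mod k = i})"
      by (intro card_mono) auto
    also have "\<dots> \<le> card {a. a < n \<and> a mod k = i}"
      by (rule card_image_le) simp
    finally show "card {x\<in>set xs. pos x mod k = i} \<le> 2"
      using card_mod_fibre_le_2[OF assms(3)[folded n_def]] by (rule order.trans)
  next
    fix x y assume xy: "x \<in> set xs" "y \<in> set xs" "x \<noteq> y" "pos x mod k = pos y mod k"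
    then have "pos x \<noteq> pos y"
      using pos(2) by metis
    then consider "pos x < pos y" | "pos y < pos x"
      by linarith
    then show "key x \<noteq> key y"
      using far_apart[of "pos x" "pos y"] far_apart[of "pos y" "pos x"] xy pos by cases auto
  qed
qed

lemma pairing_across_fibres:
  fixes h :: "'a \<Rightarrow> 'b"
  assumes "finite P" "card P \<le> 2 * k" "\<And>y. card {x\<in>P. h x = y} \<le> k"
  obtains g :: "'a \<Rightarrow> nat"
  where "\<And>x. x \<in> P \<Longrightarrow> g x < k" "\<And>i. card {x\<in>P. g x = i} \<le> 2"
    "\<And>x y. x \<in> P \<Longrightarrow> y \<in> P \<Longrightarrow> x \<noteq> y \<Longrightarrow> g x = g y \<Longrightarrow> h x \<noteq> h y"
proof -
  obtain \<phi> :: "'b \<Rightarrow> nat" where \<phi>: "inj_on \<phi> (h ` P)"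
    using finite_imp_inj_to_nat_seg[of "h ` P"] assms(1) by blast
  obtain xs0 where xs0: "set xs0 = P" "distinct xs0"
    using finite_distinct_list[OF assms(1)] by blast
  define xs where "xs = sort_key (\<lambda>x. \<phi> (h x)) xs0"
  have xs: "set xs = P" "distinct xs" "sorted (map (\<lambda>x. \<phi> (h x)) xs)"
    unfolding xs_def using xs0 by auto
  have "length xs \<le> 2 * k"
    using distinct_card[OF xs(2)] xs(1) assms(2) by simp
  moreover have "card {y\<in>set xs. \<phi> (h y) = \<phi> (h x)} \<le> k" if "x \<in> set xs" for x
  proof -
    have "y \<in> P \<and> \<phi> (h y) = \<phi> (h x) \<longleftrightarrow> y \<in> P \<and> h y = h x" for y
      using inj_on_eq_iff[OF \<phi>, of "h y" "h x"] that xs(1) by blast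
    then have "{y\<in>set xs. \<phi> (h y) = \<phi> (h x)} = {y\<in>P. h y = h x}"
      unfolding xs(1) by (rule Collect_cong)
    then show ?thesis
      using assms(3) by simp
  qed
  ultimately obtain g where "\<And>x. x \<in> P \<Longrightarrow> g x < k" "\<And>i. card {x\<in>P. g x = i} \<le> 2"
    "\<And>x y. x \<in> P \<Longrightarrow> y \<in> P \<Longrightarrow> x \<noteq> y \<Longrightarrow> g x = g y \<Longrightarrow> \<phi> (h x) \<noteq> \<phi> (h y)"
    using pairing_sorted_list[OF xs(2,3)] unfolding xs(1) by blast
  then show ?thesis
    using that by metis
qed

definition lines_through_bounded :: "nat \<Rightarrow> ('n::finite \<Rightarrow> complex) set set \<Rightarrow> ('n \<Rightarrow> complex) set \<Rightarrow> bool" where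
  "lines_through_bounded k Z p \<longleftrightarrow> (\<forall>q\<in>Z - {p}. card {r\<in>Z - {p}. rep r \<in> proj_line p q} \<le> k)"

lemma card_le_2E:
  assumes "finite F" "F \<noteq> {}" "card F \<le> 2"
  obtains q r where "q \<in> F" "r \<in> F" "F \<subseteq> {q, r}"
proof -
  have "card F = 1 \<or> card F = 2"
    using assms card_0_eq[of F] by linarith
  then show ?thesis
    using that by (auto simp: card_1_singleton_iff card_2_iff)
qed

lemma rep_notin_cspan_noncollinear:
  assumes "F \<subseteq> proj_points" "p \<in> proj_points" "p \<notin> F" "finite F" "card F \<le> 2"
    and noncollinear: "\<And>q r. q \<in> F \<Longrightarrow> r \<in> F \<Longrightarrow> q \<noteq> r \<Longrightarrow> proj_line p q \<noteq> proj_line p r"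
  shows "rep p \<notin> cspan (rep ` F)"
proof
  assume mem: "rep p \<in> cspan (rep ` F)"
  have "F \<noteq> {}"
  proof
    assume "F = {}"
    then have "rep p \<in> cspan {}"
      using mem by (simp only: image_empty)
    then show False
      using rep_nonzero[OF assms(2)] by (simp add: cspan_empty)
  qed
  then obtain q r where qr: "q \<in> F" "r \<in> F" "F \<subseteq> {q, r}"
    using card_le_2E[OF assms(4) _ assms(5)] by blast
  then have "rep p \<in> cspan {rep q, rep r}"
    using mem cspan_mono[of "rep ` F" "{rep q, rep r}"] by blast
  then have "q \<noteq> r" "proj_line p q = proj_line p r"
    using proj_line_eq_if_rep_mem_cspan[of p q r] qr(1,2) assms(1-3) by auto
  then show False
    using noncollinear qr(1,2) by blast
qed

lemma card_proj_line_fibre_le: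
  assumes "finite Z" "lines_through_bounded d Z p"
  shows "card {q\<in>Z - {p}. proj_line p q = m} \<le> d"
proof (cases "\<exists>q0\<in>Z - {p}. proj_line p q0 = m")
  case True
  then obtain q0 where q0: "q0 \<in> Z - {p}" "proj_line p q0 = m"
    by blast
  have "{q\<in>Z - {p}. proj_line p q = m} \<subseteq> {r\<in>Z - {p}. rep r \<in> proj_line p q0}"
    using q0(2) rep_mem_proj_line(2) by auto
  then have "card {q\<in>Z - {p}. proj_line p q = m} \<le> card {r\<in>Z - {p}. rep r \<in> proj_line p q0}"
    using assms(1) by (intro card_mono) auto
  also have "\<dots> \<le> d"
    using assms(2) q0(1) unfolding lines_through_bounded_def by blast
  finally show ?thesis .
next
  case False
  then have "{q\<in>Z - {p}. proj_line p q = m} = {}"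
    by blast
  then show ?thesis
    by (simp only: card.empty zero_le)
qed

lemma separating_product_form:
  assumes "Z \<subseteq> proj_points" "finite Z" "p \<in> Z" "card Z \<le> 2 * d + 1" "lines_through_bounded d Z p"
  shows "\<exists>W. (\<forall>q\<in>Z - {p}. (\<Prod>i<d. lin_form (W i) (rep q)) = 0) \<and> (\<Prod>i<d. lin_form (W i) (rep p)) \<noteq> 0"
proof -
  define P where "P = Z - {p}"
  have P: "finite P" "card P \<le> 2 * d"
    using assms(2,3,4) unfolding P_def by auto
  obtain g where g: "\<And>q. q \<in> P \<Longrightarrow> g q < d" "\<And>i. card {q\<in>P. g q = i} \<le> 2"
    "\<And>q r. q \<in> P \<Longrightarrow> r \<in> P \<Longrightarrow> q \<noteq> r \<Longrightarrow> g q = g r \<Longrightarrow> proj_line p q \<noteq> proj_line p r"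
    by (rule pairing_across_fibres[OF P card_proj_line_fibre_le[OF assms(2,5), folded P_def]]) blast
  have outside: "rep p \<notin> cspan (rep ` {q\<in>P. g q = i})" for i
  proof (rule rep_notin_cspan_noncollinear)
    show "{q\<in>P. g q = i} \<subseteq> proj_points" "p \<in> proj_points" "p \<notin> {q\<in>P. g q = i}"
      "finite {q\<in>P. g q = i}"
      using assms(1,3) P(1) unfolding P_def by auto
    show "card {q\<in>P. g q = i} \<le> 2"
      by (rule g(2))
    show "proj_line p q \<noteq> proj_line p r"
      if "q \<in> {q\<in>P. g q = i}" "r \<in> {q\<in>P. g q = i}" "q \<noteq> r" for q r
      using g(3)[of q r] that by auto
  qed
  have "\<forall>i. \<exists>w. (\<forall>v\<in>rep ` {q\<in>P. g q = i}. lin_form w v = 0) \<and> lin_form w (rep p) \<noteq> 0"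
    using separating_lin_form[OF _ outside] P(1) by simp
  from choice[OF this] obtain W
    where W: "\<forall>i. (\<forall>v\<in>rep ` {q\<in>P. g q = i}. lin_form (W i) v = 0) \<and> lin_form (W i) (rep p) \<noteq> 0"
    by blast
  have "(\<Prod>i<d. lin_form (W i) (rep q)) = 0" if "q \<in> P" for q
  proof (rule prod_zero)
    show "\<exists>i\<in>{..<d}. lin_form (W i) (rep q) = 0"
      using W g(1)[OF that] that by auto
  qed simp
  moreover have "(\<Prod>i<d. lin_form (W i) (rep p)) \<noteq> 0"
    using W by simp
  ultimately show ?thesis
    unfolding P_def by blast
qed

lemma sum_single_support:
  fixes h :: "'a \<Rightarrow> 'b::semiring_0"
  assumes "finite A" "\<forall>L\<in>A. L \<noteq> p \<longrightarrow> h L = 0"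
  shows "(\<Sum>L\<in>A. c L * h L) = (if p \<in> A then c p else 0) * h p"
proof -
  have "(\<Sum>L\<in>A. c L * h L) = (\<Sum>L\<in>A. if L = p then c L * h L else 0)"
    using assms(2) by (intro sum.cong) auto
  then show ?thesis
    using assms(1) by simp
qed

lemma expansion_coeff_eq:
  fixes A B :: "('n::finite \<Rightarrow> complex) set set"
  assumes "A \<subseteq> proj_points" "B \<subseteq> proj_points" "finite A" "finite B"
    and eq: "(\<lambda>f. \<Sum>L\<in>A. c L * ver d (rep L) f) = (\<lambda>f. \<Sum>L\<in>B. e L * ver d (rep L) f)"
    and "card (A \<union> B) \<le> 2 * d + 1" "p \<in> A \<union> B" "lines_through_bounded d (A \<union> B) p"
  shows "(if p \<in> A then c p else 0) = (if p \<in> B then e p else 0)"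
proof -
  obtain W where W: "\<forall>q\<in>(A \<union> B) - {p}. (\<Prod>i<d. lin_form (W i) (rep q)) = 0"
    "(\<Prod>i<d. lin_form (W i) (rep p)) \<noteq> 0"
    using separating_product_form[of "A \<union> B" p d] assms by auto
  define F where "F L = (\<Prod>i<d. lin_form (W i) (rep L))" for L
  have "contract d W (\<lambda>f. \<Sum>L\<in>A. c L * ver d (rep L) f) = (if p \<in> A then c p else 0) * F p"
    unfolding contract_combination contract_ver
    using sum_single_support[OF assms(3), of p F c] W(1) unfolding F_def by blast
  moreover have "contract d W (\<lambda>f. \<Sum>L\<in>B. e L * ver d (rep L) f) = (if p \<in> B then e p else 0) * F p"
    unfolding contract_combination contract_ver
    using sum_single_support[OF assms(4), of p F e] W(1) unfolding F_def by blast
  ultimately show ?thesis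
    using eq W(2) unfolding F_def by simp
qed

lemma lines_through_bounded_off_rich_line:
  assumes "Z \<subseteq> proj_points" "finite Z" "card Z \<le> 2 * d"
    and rich: "d + 2 \<le> card {r\<in>Z. rep r \<in> cspan {u, w}}"
    and "p \<in> Z" "rep p \<notin> cspan {u, w}"
  shows "lines_through_bounded d Z p"
  unfolding lines_through_bounded_def
proof
  fix q assume "q \<in> Z - {p}"
  define M where "M = {r\<in>Z - {p}. rep r \<in> proj_line p q}"
  define R where "R = {r\<in>Z. rep r \<in> cspan {u, w}}"
  \<comment> \<open>Two points on both lines would span both, putting p on the rich line.\<close>
  have "card (M \<inter> R) \<le> 1"
  proof -
    have "r1 = r2" if "r1 \<in> M \<inter> R" "r2 \<in> M \<inter> R" for r1 r2
    proof (rule ccontr)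
      assume "r1 \<noteq> r2"
      moreover have "r1 \<in> proj_points" "r2 \<in> proj_points"
        using that assms(1) unfolding M_def by auto
      ultimately have "rep p \<in> cspan {rep r1, rep r2}"
        using mem_cspan_two_points that unfolding M_def proj_line_def by blast
      also have "cspan {rep r1, rep r2} \<subseteq> cspan {u, w}"
        using that unfolding R_def by (intro cspan_pair_subset) auto
      finally show False
        using assms(6) by blast
    qed
    moreover have "finite (M \<inter> R)"
      using assms(2) unfolding M_def by simp
    ultimately have "card (M \<inter> R) \<le> Suc 0"
      using card_le_Suc0_iff_eq by blast
    then show ?thesis
      by simp
  qed
  moreover have "card M + card R = card (M \<union> R) + card (M \<inter> R)"
    using assms(2) unfolding M_def R_def by (intro card_Un_Int) auto
  moreover have "card (M \<union> R) \<le> card Z"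
    using assms(2) unfolding M_def R_def by (intro card_mono) auto
  ultimately show "card M \<le> d"
    using assms(3) rich unfolding R_def by linarith
qed

lemma rich_line_if_not_lines_through_bounded:
  assumes "finite Z" "p \<in> Z" "\<not> lines_through_bounded d Z p"
  obtains u w where "d + 2 \<le> card {r\<in>Z. rep r \<in> cspan {u, w}}"
proof -
  obtain q where q: "q \<in> Z - {p}" "d < card {r\<in>Z - {p}. rep r \<in> proj_line p q}"
    using assms(3) unfolding lines_through_bounded_def by (auto simp: not_le)
  have "insert p {r\<in>Z - {p}. rep r \<in> proj_line p q} \<subseteq> {r\<in>Z. rep r \<in> proj_line p q}"
    using assms(2) rep_mem_proj_line(1) by auto
  then have "card (insert p {r\<in>Z - {p}. rep r \<in> proj_line p q}) \<le> card {r\<in>Z. rep r \<in> proj_line p q}"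
    using assms(1) by (intro card_mono) auto
  then have "d + 2 \<le> card {r\<in>Z. rep r \<in> cspan {rep p, rep q}}"
    using q(2) assms(1) unfolding proj_line_def by simp
  then show ?thesis
    by (rule that)
qed

lemma card_le_twice_card_Int:
  assumes "finite A" "finite B" "card B \<le> card A" "A - R = B - R" "R \<subseteq> A \<union> B"
  shows "card R \<le> 2 * card (A \<inter> R)"
proof -
  have "card (B \<inter> R) \<le> card (A \<inter> R)"
    using card_Int_Diff[OF assms(1), of R] card_Int_Diff[OF assms(2), of R] assms(3,4) by simp
  moreover have "card R \<le> card ((A \<inter> R) \<union> (B \<inter> R))"
    using assms(1,2,5) by (intro card_mono) auto
  moreover have "card ((A \<inter> R) \<union> (B \<inter> R)) \<le> card (A \<inter> R) + card (B \<inter> R)"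
    by (rule card_Un_le)
  ultimately show ?thesis
    by linarith
qed

lemma expansion_unique:
  fixes A B :: "('n::finite \<Rightarrow> complex) set set"
  assumes "A \<subseteq> proj_points" "B \<subseteq> proj_points" "finite A" "finite B"
    and "\<forall>L\<in>A. c L \<noteq> 0" "\<forall>L\<in>B. e L \<noteq> 0"
    and eq: "(\<lambda>f. \<Sum>L\<in>A. c L * ver d (rep L) f) = (\<lambda>f. \<Sum>L\<in>B. e L * ver d (rep L) f)"
    and "card B \<le> card A" "card A \<le> d"
    and not_aligned: "\<forall>S\<subseteq>A. aligned S \<longrightarrow> 2 * card S < d"
  shows "A = B"
proof (rule ccontr)
  assume "A \<noteq> B"
  define Z where "Z = A \<union> B"
  have Z: "Z \<subseteq> proj_points" "finite Z" "card Z \<le> 2 * d"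
    using assms(1-4,8,9) card_Un_le[of A B] unfolding Z_def by auto
  have agree: "p \<in> A \<longleftrightarrow> p \<in> B" if "p \<in> Z" "lines_through_bounded d Z p" for p
  proof -
    have "(if p \<in> A then c p else 0) = (if p \<in> B then e p else 0)"
      by (rule expansion_coeff_eq[OF assms(1-4) eq]) (use that Z(3) in \<open>auto simp: Z_def\<close>)
    then show ?thesis
      using assms(5,6) by (cases "p \<in> A"; cases "p \<in> B") auto
  qed
  then obtain p0 where "p0 \<in> Z" "\<not> lines_through_bounded d Z p0"
    using \<open>A \<noteq> B\<close> unfolding Z_def by blast
  then obtain u w where rich: "d + 2 \<le> card {r\<in>Z. rep r \<in> cspan {u, w}}"
    using rich_line_if_not_lines_through_bounded Z(2) by blast
  define R where "R = {r\<in>Z. rep r \<in> cspan {u, w}}"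
  have "p \<in> A \<longleftrightarrow> p \<in> B" if "p \<in> Z - R" for p
    using that agree lines_through_bounded_off_rich_line[OF Z rich] unfolding R_def by blast
  then have "A - R = B - R"
    unfolding Z_def by blast
  then have "card R \<le> 2 * card (A \<inter> R)"
    using card_le_twice_card_Int[OF assms(3,4,8)] unfolding R_def Z_def by blast
  moreover have "aligned (A \<inter> R)"
    by (rule aligned_if_reps_in_cspan) (use assms(1) in \<open>auto simp: R_def\<close>)
  then have "2 * card (A \<inter> R) < d"
    using not_aligned by blast
  ultimately show False
    using rich unfolding R_def by linarith
qed

lemma minimal_decomposition_unique:
  assumes "minimal_decomposition d T A" "card A \<le> d" "\<forall>S\<subseteq>A. aligned S \<longrightarrow> 2 * card S < d"
    and "is_decomposition d T B" "card B \<le> card A"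
  shows "B = A"
proof -
  obtain B' where B': "B' \<subseteq> B" "minimal_decomposition d T B'"
    using decomposition_contains_minimal[OF assms(4)] by blast
  have A: "finite A" "A \<subseteq> proj_points" "T \<in> ver_span d A"
    using assms(1) unfolding minimal_decomposition_def is_decomposition_def by auto
  have B: "finite B'" "B' \<subseteq> proj_points" "T \<in> ver_span d B'" "finite B"
    using B'(2) assms(4) unfolding minimal_decomposition_def is_decomposition_def by auto
  obtain c where c: "T = (\<lambda>f. \<Sum>L\<in>A. c L * ver d (rep L) f)"
    using A(3) unfolding ver_span_iff[OF A(1,2)] by blast
  obtain e where e: "T = (\<lambda>f. \<Sum>L\<in>B'. e L * ver d (rep L) f)"
    using B(3) unfolding ver_span_iff[OF B(1,2)] by blast
  have card: "card B' \<le> card A"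
    using card_mono[OF B(4) B'(1)] assms(5) by linarith
  have "\<forall>L\<in>A. c L \<noteq> 0" "\<forall>L\<in>B'. e L \<noteq> 0"
    using minimal_decomposition_coeff_nonzero[OF assms(1) c]
      minimal_decomposition_coeff_nonzero[OF B'(2) e] by blast+
  then have "A = B'"
    using expansion_unique[OF A(2) B(2) A(1) B(1) _ _ trans[OF c[symmetric] e] card assms(2,3)] by blast
  then show "B = A"
    using card_seteq[OF B(4) _ assms(5)] B'(1) by blast
qed

theorem mainTheorem4:
  fixes d :: nat and T :: "(nat \<Rightarrow> 'n::finite) \<Rightarrow> complex"
    and A :: "('n \<Rightarrow> complex) set set"
  assumes "T \<noteq> (\<lambda>_. 0)"
    and "minimal_decomposition d T A"
    and "card A \<le> d"
    and "\<not> (\<exists>S\<subseteq>A. aligned S \<and> 2 * card S \<ge> d)"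
  shows "tensor_rank d T = card A \<and> identifiable d T"
proof -
  have decA: "is_decomposition d T A"
    using assms(2) unfolding minimal_decomposition_def by blast
  have not_aligned: "\<forall>S\<subseteq>A. aligned S \<longrightarrow> 2 * card S < d"
    using assms(4) not_le by blast
  have unique: "B = A" if "is_decomposition d T B" "card B \<le> card A" for B
    by (rule minimal_decomposition_unique[OF assms(2,3) not_aligned that])
  have rank: "tensor_rank d T = card A"
    unfolding tensor_rank_def
  proof (rule Least_equality)
    fix r assume "\<exists>B. is_decomposition d T B \<and> card B = r"
    then obtain B where "is_decomposition d T B" "card B = r"
      by blast
    then show "card A \<le> r"
      using unique[of B] by force
  qed (use decA in blast)
  moreover have "identifiable d T"
    unfolding identifiable_def rank
    by (rule ex1I[of _ A]) (use decA unique in auto)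
  ultimately show ?thesis
    by blast
qed

end
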